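(* Let $I$ and $J$ be finite sets, let $g\in\mathbb{R}^J$, and for each $i\in I$ let $u_i:\mathbb{R}^J\to\mathbb{R}\cup\{-\infty\}$ be upper semicontinuous and concave with $u_i(x_i+rg)>u_i(x_i)$ for all $x_i\in\mathrm{dom}\,u_i$ and all $r>0$. Let $x^0\in\mathbb{R}^{I\times J}$ be an allocation. Then: (1) if $x^0$ is Pareto efficient, it is a double auction equilibrium. (2) If in addition each $u_i$ satisfies: whenever $u_i(x_i)>u_i(x_i')$ for some $x_i'\in\mathrm{dom}\,u_i$, then $x_i-\varepsilon g\in\mathrm{dom}\,u_i$ for all small enough $\varepsilon>0$, then every double auction equilibrium $x^0$ is Pareto efficient.
   Context: $\mathrm{dom}\,u_i=\{x\in\mathbb{R}^J\mid u_i(x)>-\infty\}$. Given the current allocation $x^0=(x^0_i)_{i\in I}$, define agent $i$'s indifference-price function $D_i(x_i):=\sup\{r\in\mathbb{R}\mid u_i(x^0_i+x_i-rg)\ge u_i(x^0_i)\}$, and let $CS(x^0)$ be the optimal value (supremum) of the problem: maximize $\sum_{i\in I}D_i(x_i)$ over $x\in\mathbb{R}^{I\times J}$ subject to $\sum_{i\in I}x_i=0$. The allocation $x^0$ is a double auction equilibrium if $CS(x^0)=0$. An allocation $x$ is feasible if $\sum_{i\in I}x_i=\sum_{i\in I}x^0_i$; a feasible allocation $x$ is Pareto efficient if there is no feasible allocation $x'$ with $u_i(x'_i)\ge u_i(x_i)$ for all $i\in I$ and strict inequality for at least one $i$. *)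

theory Defs
  imports "HOL-Analysis.Analysis"
begin

text \<open>Utilities take values in the reals extended by minus infinity; we use ereal
  together with the standing assumption that +infinity is never attained.\<close>

definition edom :: "('a \<Rightarrow> ereal) \<Rightarrow> 'a set" where
  "edom u = {x. u x > -\<infinity>}"

definition usc :: "('a::topological_space \<Rightarrow> ereal) \<Rightarrow> bool" where
  "usc u \<longleftrightarrow> (\<forall>x. Limsup (at x) u \<le> u x)"

definition concave_ext :: "('a::real_vector \<Rightarrow> ereal) \<Rightarrow> bool" where
  "concave_ext u \<longleftrightarrow>
     (\<forall>x y (t::real). 0 < t \<and> t < 1 \<longrightarrow>
        ereal t * u x + ereal (1 - t) * u y \<le> u (t *\<^sub>R x + (1 - t) *\<^sub>R y))"

definition indiff_price :: "('a::real_vector \<Rightarrow> ereal) \<Rightarrow> 'a \<Rightarrow> 'a \<Rightarrow> 'a \<Rightarrow> ereal" where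
  "indiff_price u g x0i xi = (SUP r \<in> {r::real. u (x0i + xi - r *\<^sub>R g) \<ge> u x0i}. ereal r)"

definition CS :: "('i::finite \<Rightarrow> 'a::real_vector \<Rightarrow> ereal) \<Rightarrow> 'a \<Rightarrow> ('i \<Rightarrow> 'a) \<Rightarrow> ereal" where
  "CS u g x0 = (SUP x \<in> {x::'i \<Rightarrow> 'a. (\<Sum>i\<in>UNIV. x i) = 0}.
                   \<Sum>i\<in>UNIV. indiff_price (u i) g (x0 i) (x i))"

definition double_auction_eq :: "('i::finite \<Rightarrow> 'a::real_vector \<Rightarrow> ereal) \<Rightarrow> 'a \<Rightarrow> ('i \<Rightarrow> 'a) \<Rightarrow> bool" where
  "double_auction_eq u g x0 \<longleftrightarrow> CS u g x0 = 0"

definition feasible :: "('i::finite \<Rightarrow> 'a::real_vector) \<Rightarrow> ('i \<Rightarrow> 'a) \<Rightarrow> bool" where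
  "feasible x0 x \<longleftrightarrow> (\<Sum>i\<in>UNIV. x i) = (\<Sum>i\<in>UNIV. x0 i)"

definition pareto_efficient :: "('i::finite \<Rightarrow> 'a::real_vector \<Rightarrow> ereal) \<Rightarrow> ('i \<Rightarrow> 'a) \<Rightarrow> ('i \<Rightarrow> 'a) \<Rightarrow> bool" where
  "pareto_efficient u x0 x \<longleftrightarrow> feasible x0 x \<and>
     \<not> (\<exists>x'. feasible x0 x' \<and> (\<forall>i. u i (x' i) \<ge> u i (x i)) \<and> (\<exists>i. u i (x' i) > u i (x i)))"

end

theory Submission
  imports Defs
begin

text \<open>Write \<open>D\<^sub>i\<close> for the indifference price of agent \<open>i\<close>. Since utility strictly increases
  along \<open>g\<close>, the prices agent \<open>i\<close> accepts for a trade form a down-set, and concavity bounds it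
  above (utility falls at least linearly along \<open>-g\<close>), so \<open>D\<^sub>i < \<infinity>\<close>. If a balanced trade had
  positive total surplus, every agent could pay slightly less than \<open>D\<^sub>i\<close> and the surplus could be
  handed back in units of \<open>g\<close>, making everyone strictly better off; so Pareto efficiency forces
  \<open>CS(x\<^sup>0) \<le> 0\<close>, and the zero trade gives \<open>CS(x\<^sup>0) \<ge> 0\<close>. Conversely, a Pareto improvement
  \<open>x'\<close> yields the balanced trade \<open>x' - x\<^sup>0\<close> with all \<open>D\<^sub>i \<ge> 0\<close>; the domain condition and
  concavity let the strictly better-off agent pay a small positive price, so \<open>CS(x\<^sup>0) > 0\<close>.\<close>

lemma concave_ext_real_values:
  assumes "concave_ext u" "u x = ereal a" "u y = ereal b" "0 < t" "t < 1"
  shows "ereal (t * a + (1 - t) * b) \<le> u (t *\<^sub>R x + (1 - t) *\<^sub>R y)"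
  using assms unfolding concave_ext_def by (metis plus_ereal.simps(1) times_ereal.simps(1))

lemma concave_ext_ray_bound:
  fixes u :: "'a::real_vector \<Rightarrow> ereal"
  assumes conc: "concave_ext u" and "u y = ereal h0" "u (y - g) = ereal h1" and "1 < R"
  shows "u (y - R *\<^sub>R g) \<le> ereal (h0 - R * (h0 - h1))"
proof -
  define t where "t = 1 - 1 / R"
  have t: "0 < t" "t < 1" "1 - t = 1 / R"
    using \<open>1 < R\<close> by (auto simp: t_def)
  have "t *\<^sub>R y + (1 - t) *\<^sub>R (y - R *\<^sub>R g) = y - g"
    using \<open>1 < R\<close> by (simp add: t_def algebra_simps)
  then have comb: "ereal t * ereal h0 + ereal (1 / R) * u (y - R *\<^sub>R g) \<le> ereal h1"
    using conc t assms(2,3) unfolding concave_ext_def by metis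
  show ?thesis
  proof (cases "u (y - R *\<^sub>R g)")
    case (real hR)
    then have "t * h0 + hR / R \<le> h1" using comb by simp
    then have "R * t * h0 + hR \<le> R * h1"
      using \<open>1 < R\<close> by (simp add: field_simps)
    then show ?thesis using real \<open>1 < R\<close> by (simp add: t_def algebra_simps)
  next
    case PInf
    then show ?thesis using comb \<open>1 < R\<close> by simp
  qed simp
qed

lemma concave_ext_segment_gt:
  fixes u :: "'a::real_vector \<Rightarrow> ereal"
  assumes conc: "concave_ext u" and no_pinf: "\<And>x. u x \<noteq> \<infinity>"
    and "c < u p" and "p + v \<in> edom u"
  shows "\<exists>s. 0 < s \<and> s < 1 \<and> c < u (p + s *\<^sub>R v)"
proof -
  obtain a where a: "u p = ereal a" using \<open>c < u p\<close> no_pinf[of p] by (cases "u p") auto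
  obtain b where b: "u (p + v) = ereal b"
    using \<open>p + v \<in> edom u\<close> no_pinf[of "p + v"] by (cases "u (p + v)") (auto simp: edom_def)
  have "((\<lambda>s. (1 - s) * a + s * b) \<longlongrightarrow> (1 - 0) * a + 0 * b) (at_right 0)"
    by (intro tendsto_intros)
  then have "((\<lambda>s. ereal ((1 - s) * a + s * b)) \<longlongrightarrow> u p) (at_right 0)"
    using a by simp
  then have "\<forall>\<^sub>F s in at_right 0. c < ereal ((1 - s) * a + s * b)"
    using \<open>c < u p\<close> by (rule order_tendstoD(1))
  moreover have "\<forall>\<^sub>F s in at_right 0. s \<in> {0<..<1::real}"
    by (rule eventually_at_right_real) simp
  ultimately have "\<forall>\<^sub>F s in at_right 0. c < ereal ((1 - s) * a + s * b) \<and> s \<in> {0<..<1}"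
    by (rule eventually_conj)
  then obtain s where "c < ereal ((1 - s) * a + s * b)" and s: "0 < s" "s < 1"
    using eventually_happens'[OF trivial_limit_at_right_real] by auto
  moreover have "ereal ((1 - s) * a + (1 - (1 - s)) * b) \<le> u ((1 - s) *\<^sub>R p + (1 - (1 - s)) *\<^sub>R (p + v))"
    using s by (intro concave_ext_real_values[OF conc a b]) auto
  moreover have "(1 - s) *\<^sub>R p + (1 - (1 - s)) *\<^sub>R (p + v) = p + s *\<^sub>R v"
    by (simp add: algebra_simps)
  ultimately show ?thesis by auto
qed

definition increasing_in_direction :: "('a::real_vector \<Rightarrow> ereal) \<Rightarrow> 'a \<Rightarrow> bool" where
  "increasing_in_direction u g \<longleftrightarrow> (\<forall>x \<in> edom u. \<forall>r > 0. u x < u (x + r *\<^sub>R g))"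

definition acceptable_prices :: "('a::real_vector \<Rightarrow> ereal) \<Rightarrow> 'a \<Rightarrow> 'a \<Rightarrow> 'a \<Rightarrow> real set" where
  "acceptable_prices u g x0i xi = {r. u x0i \<le> u (x0i + xi - r *\<^sub>R g)}"

lemma indiff_price_eq_SUP_acceptable_prices:
  "indiff_price u g x0i xi = (SUP r \<in> acceptable_prices u g x0i xi. ereal r)"
  unfolding indiff_price_def acceptable_prices_def ..

lemma acceptable_prices_downward_closed:
  fixes u :: "'a::real_vector \<Rightarrow> ereal"
  assumes increasing: "increasing_in_direction u g"
    and x0i: "x0i \<in> edom u" and r: "r \<in> acceptable_prices u g x0i xi" and "r' \<le> r"
  shows "r' \<in> acceptable_prices u g x0i xi"
proof (cases "r' = r")
  case False
  have acc: "u x0i \<le> u (x0i + xi - r *\<^sub>R g)"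
    using r by (simp add: acceptable_prices_def)
  then have "x0i + xi - r *\<^sub>R g \<in> edom u"
    using x0i by (auto simp: edom_def)
  then have "u (x0i + xi - r *\<^sub>R g) < u ((x0i + xi - r *\<^sub>R g) + (r - r') *\<^sub>R g)"
    using increasing False \<open>r' \<le> r\<close> by (simp add: increasing_in_direction_def)
  also have "(x0i + xi - r *\<^sub>R g) + (r - r') *\<^sub>R g = x0i + xi - r' *\<^sub>R g"
    by (simp add: algebra_simps)
  finally have "u (x0i + xi - r *\<^sub>R g) < u (x0i + xi - r' *\<^sub>R g)" .
  then show ?thesis using acc by (simp add: acceptable_prices_def)
qed (use r in simp)

lemma less_indiff_price_imp_acceptable:
  fixes u :: "'a::real_vector \<Rightarrow> ereal"
  assumes increasing: "increasing_in_direction u g"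
    and x0i: "x0i \<in> edom u" and "ereal r < indiff_price u g x0i xi"
  shows "r \<in> acceptable_prices u g x0i xi"
proof -
  obtain r' where "r' \<in> acceptable_prices u g x0i xi" "r < r'"
    using assms(3) by (auto simp: indiff_price_eq_SUP_acceptable_prices less_SUP_iff)
  then show ?thesis
    using acceptable_prices_downward_closed[OF increasing x0i] by simp
qed

lemma acceptable_le_indiff_price:
  "r \<in> acceptable_prices u g x0i xi \<Longrightarrow> ereal r \<le> indiff_price u g x0i xi"
  unfolding indiff_price_eq_SUP_acceptable_prices by (rule SUP_upper)

lemma indiff_price_nonneg:
  assumes "u x0i \<le> u (x0i + xi)"
  shows "0 \<le> indiff_price u g x0i xi"
  using acceptable_le_indiff_price[where r = 0] assms
  by (simp add: acceptable_prices_def zero_ereal_def)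

lemma bdd_above_acceptable_prices:
  fixes u :: "'a::real_vector \<Rightarrow> ereal"
  assumes conc: "concave_ext u" and no_pinf: "\<And>x. u x \<noteq> \<infinity>"
    and increasing: "increasing_in_direction u g"
    and x0i: "x0i \<in> edom u"
  shows "bdd_above (acceptable_prices u g x0i xi)"
proof (cases "1 \<in> acceptable_prices u g x0i xi")
  case False
  have "r \<le> 1" if "r \<in> acceptable_prices u g x0i xi" for r
    using acceptable_prices_downward_closed[OF increasing x0i that, of 1] False by linarith
  then show ?thesis by (rule bdd_aboveI)
next
  case True
  define y where "y = x0i + xi"
  have acc: "u x0i \<le> u (y - r *\<^sub>R g)" if "r \<in> acceptable_prices u g x0i xi" for r
    using that by (simp add: acceptable_prices_def y_def)
  have "0 \<in> acceptable_prices u g x0i xi"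
    using acceptable_prices_downward_closed[OF increasing x0i True] by simp
  then have "u x0i \<le> u y" "u x0i \<le> u (y - g)"
    using acc True by (metis diff_zero scaleR_zero_left, metis scaleR_one)
  moreover obtain c where c: "u x0i = ereal c"
    using x0i no_pinf[of x0i] by (cases "u x0i") (auto simp: edom_def)
  ultimately obtain h0 h1 where h0: "u y = ereal h0" and h1: "u (y - g) = ereal h1"
    using no_pinf[of y] no_pinf[of "y - g"] by (cases "u y"; cases "u (y - g)") auto
  have "y - g \<in> edom u"
    using h1 by (simp add: edom_def)
  then have "u (y - g) < u (y - g + 1 *\<^sub>R g)"
    using increasing zero_less_one unfolding increasing_in_direction_def by blast
  then have "h1 < h0" using h0 h1 by simp
  have "r \<le> max 1 ((h0 - c) / (h0 - h1))" if r: "r \<in> acceptable_prices u g x0i xi" for r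
  proof (cases "1 < r")
    case True
    have "ereal c \<le> ereal (h0 - r * (h0 - h1))"
      using acc[OF r] c concave_ext_ray_bound[OF conc h0 h1 True] by (metis order_trans)
    then have "r * (h0 - h1) \<le> h0 - c" by simp
    then have "r \<le> (h0 - c) / (h0 - h1)"
      using \<open>h1 < h0\<close> by (simp add: pos_le_divide_eq)
    then show ?thesis by simp
  qed simp
  then show ?thesis by (intro bdd_aboveI)
qed

lemma indiff_price_neq_PInf:
  fixes u :: "'a::real_vector \<Rightarrow> ereal"
  assumes conc: "concave_ext u" and no_pinf: "\<And>x. u x \<noteq> \<infinity>"
    and increasing: "increasing_in_direction u g"
    and x0i: "x0i \<in> edom u"
  shows "indiff_price u g x0i xi \<noteq> \<infinity>"
proof -
  obtain B where "\<And>r. r \<in> acceptable_prices u g x0i xi \<Longrightarrow> r \<le> B"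
    using bdd_above_acceptable_prices[OF assms, where xi = xi] by (auto simp: bdd_above_def)
  then have "indiff_price u g x0i xi \<le> ereal B"
    unfolding indiff_price_eq_SUP_acceptable_prices by (auto intro: SUP_least)
  then show ?thesis by auto
qed

lemma indiff_price_pos:
  fixes u :: "'a::real_vector \<Rightarrow> ereal"
  assumes conc: "concave_ext u" and no_pinf: "\<And>x. u x \<noteq> \<infinity>"
    and better: "u x0i < u (x0i + xi)" and "0 < e" and "x0i + xi - e *\<^sub>R g \<in> edom u"
  shows "0 < indiff_price u g x0i xi"
proof -
  obtain s where s: "0 < s" "s < 1" and "u x0i < u (x0i + xi + s *\<^sub>R (- e *\<^sub>R g))"
    using concave_ext_segment_gt[OF conc no_pinf better, of "- e *\<^sub>R g"] assms(5) by auto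
  then have "s * e \<in> acceptable_prices u g x0i xi"
    by (simp add: acceptable_prices_def algebra_simps)
  then have "ereal (s * e) \<le> indiff_price u g x0i xi"
    by (rule acceptable_le_indiff_price)
  with \<open>0 < s\<close> \<open>0 < e\<close> show ?thesis
    using less_le_trans[of 0 "ereal (s * e)"] by simp
qed

lemma sum_indiff_price_le_CS:
  fixes u :: "'i::finite \<Rightarrow> 'a::real_vector \<Rightarrow> ereal"
  assumes "(\<Sum>i\<in>UNIV. x i) = 0"
  shows "(\<Sum>i\<in>UNIV. indiff_price (u i) g (x0 i) (x i)) \<le> CS u g x0"
  unfolding CS_def by (rule SUP_upper) (simp add: assms)

lemma CS_nonneg: "0 \<le> CS u g x0"
proof -
  have "0 \<le> (\<Sum>i\<in>UNIV. indiff_price (u i) g (x0 i) 0)"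
    by (intro sum_nonneg indiff_price_nonneg) simp
  also have "\<dots> \<le> CS u g x0"
    using sum_indiff_price_le_CS[of "\<lambda>_. 0"] by simp
  finally show ?thesis .
qed

lemma positive_surplus_imp_strict_improvement:
  fixes u :: "'i::finite \<Rightarrow> 'a::real_vector \<Rightarrow> ereal"
  assumes conc: "\<And>i. concave_ext (u i)" and no_pinf: "\<And>i x. u i x \<noteq> \<infinity>"
    and increasing: "\<And>i. increasing_in_direction (u i) g" and x0_dom: "\<And>i. x0 i \<in> edom (u i)"
    and balanced: "(\<Sum>i\<in>UNIV. x i) = 0"
    and surplus: "0 < (\<Sum>i\<in>UNIV. indiff_price (u i) g (x0 i) (x i))"
  shows "\<exists>x'. feasible x0 x' \<and> (\<forall>i. u i (x0 i) < u i (x' i))"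
proof -
  define D where "D i = indiff_price (u i) g (x0 i) (x i)" for i
  have D_PInf: "D i \<noteq> \<infinity>" for i
    unfolding D_def by (rule indiff_price_neq_PInf[OF conc no_pinf increasing x0_dom])
  have D_MInf: "D i \<noteq> -\<infinity>" for i
  proof
    assume "D i = -\<infinity>"
    moreover have "sum D (UNIV - {i}) \<noteq> \<infinity>"
      using D_PInf by (simp add: sum_Pinfty)
    ultimately have "sum D UNIV = -\<infinity>"
      using sum.remove[of UNIV i D] by simp
    then show False using surplus by (simp add: D_def)
  qed
  define d where "d i = real_of_ereal (D i)" for i
  have d: "D i = ereal (d i)" for i
    using D_PInf[of i] D_MInf[of i] by (cases "D i") (auto simp: d_def)
  define n where "n = real CARD('i)"
  define \<delta> where "\<delta> = sum d UNIV / (2 * n)"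
  have "0 < sum d UNIV" using surplus d by (simp add: D_def[symmetric])
  then have "0 < \<delta>" "2 * n * \<delta> = sum d UNIV"
    by (simp_all add: \<delta>_def n_def)
  have acc: "d i - \<delta> \<in> acceptable_prices (u i) g (x0 i) (x i)" for i
    using less_indiff_price_imp_acceptable[OF increasing x0_dom] d \<open>0 < \<delta>\<close>
    by (simp add: D_def[symmetric])
  \<comment> \<open>agent \<open>i\<close> pays the acceptable price \<open>d i - \<delta>\<close> and receives \<open>\<delta>\<close> of the surplus back\<close>
  define x' where "x' i = x0 i + x i - (d i - 2 * \<delta>) *\<^sub>R g" for i
  have "(\<Sum>i\<in>UNIV. x' i) = (\<Sum>i\<in>UNIV. x0 i) - (sum d UNIV - 2 * n * \<delta>) *\<^sub>R g"
    by (simp add: x'_def n_def balanced sum.distrib sum_subtractf scaleR_sum_left[symmetric])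
  then have "feasible x0 x'"
    using \<open>2 * n * \<delta> = sum d UNIV\<close> by (simp add: feasible_def)
  moreover have "u i (x0 i) < u i (x' i)" for i
  proof -
    have "u i (x0 i) \<le> u i (x0 i + x i - (d i - \<delta>) *\<^sub>R g)"
      using acc by (simp add: acceptable_prices_def)
    moreover from this have "x0 i + x i - (d i - \<delta>) *\<^sub>R g \<in> edom (u i)"
      using x0_dom[of i] by (auto simp: edom_def)
    moreover have "x' i = (x0 i + x i - (d i - \<delta>) *\<^sub>R g) + \<delta> *\<^sub>R g"
      by (simp add: x'_def algebra_simps) (simp add: mult_2_right flip: scaleR_add_left)
    ultimately show ?thesis
      using increasing \<open>0 < \<delta>\<close> unfolding increasing_in_direction_def by fastforce
  qed
  ultimately show ?thesis by blast
qed

lemma pareto_efficient_imp_double_auction_eq: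
  fixes u :: "'i::finite \<Rightarrow> 'a::real_vector \<Rightarrow> ereal"
  assumes conc: "\<And>i. concave_ext (u i)" and no_pinf: "\<And>i x. u i x \<noteq> \<infinity>"
    and increasing: "\<And>i. increasing_in_direction (u i) g" and x0_dom: "\<And>i. x0 i \<in> edom (u i)"
    and efficient: "pareto_efficient u x0 x0"
  shows "double_auction_eq u g x0"
proof -
  have "CS u g x0 \<le> 0"
    unfolding CS_def
  proof (rule SUP_least)
    fix x :: "'i \<Rightarrow> 'a"
    assume "x \<in> {x. (\<Sum>i\<in>UNIV. x i) = 0}"
    then have balanced: "(\<Sum>i\<in>UNIV. x i) = 0" by simp
    show "(\<Sum>i\<in>UNIV. indiff_price (u i) g (x0 i) (x i)) \<le> 0"
    proof (rule ccontr)
      assume "\<not> ?thesis"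
      then obtain x' where "feasible x0 x'" "\<And>i. u i (x0 i) < u i (x' i)"
        using positive_surplus_imp_strict_improvement[of u g x0 x, OF conc no_pinf increasing x0_dom balanced]
        by (auto simp: not_le)
      then show False
        using efficient unfolding pareto_efficient_def by (metis less_imp_le)
    qed
  qed
  then show ?thesis
    using CS_nonneg[of u g x0] by (simp add: double_auction_eq_def)
qed

lemma double_auction_eq_imp_pareto_efficient:
  fixes u :: "'i::finite \<Rightarrow> 'a::real_vector \<Rightarrow> ereal"
  assumes conc: "\<And>i. concave_ext (u i)" and no_pinf: "\<And>i x. u i x \<noteq> \<infinity>"
    and x0_dom: "\<And>i. x0 i \<in> edom (u i)"
    and slack: "\<And>i x x'. x' \<in> edom (u i) \<Longrightarrow> u i x' < u i x \<Longrightarrow> \<exists>e>0. x - e *\<^sub>R g \<in> edom (u i)"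
    and equilibrium: "double_auction_eq u g x0"
  shows "pareto_efficient u x0 x0"
  unfolding pareto_efficient_def
proof (intro conjI notI)
  show "feasible x0 x0" by (simp add: feasible_def)
  assume "\<exists>x'. feasible x0 x' \<and> (\<forall>i. u i (x0 i) \<le> u i (x' i)) \<and> (\<exists>i. u i (x0 i) < u i (x' i))"
  then obtain x' k where feasible: "feasible x0 x'" and weakly_better: "\<And>i. u i (x0 i) \<le> u i (x' i)"
    and better: "u k (x0 k) < u k (x' k)"
    by blast
  define y where "y i = x' i - x0 i" for i
  have "0 < (\<Sum>i\<in>UNIV. indiff_price (u i) g (x0 i) (y i))"
  proof (rule sum_pos2)
    obtain e where "0 < e" and "x' k - e *\<^sub>R g \<in> edom (u k)"
      using slack[OF x0_dom better] by blast
    then show "0 < indiff_price (u k) g (x0 k) (y k)"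
      using better by (intro indiff_price_pos[OF conc no_pinf _ \<open>0 < e\<close>]) (simp_all add: y_def)
    show "0 \<le> indiff_price (u i) g (x0 i) (y i)" for i
      using weakly_better by (intro indiff_price_nonneg) (simp add: y_def)
  qed simp_all
  also have "\<dots> \<le> CS u g x0"
    using feasible by (intro sum_indiff_price_le_CS) (simp add: y_def feasible_def sum_subtractf)
  finally show False
    using equilibrium by (simp add: double_auction_eq_def)
qed

theorem theorem5p2:
  fixes u :: "'i::finite \<Rightarrow> real^'j::finite \<Rightarrow> ereal"
    and g :: "real^'j"
    and x0 :: "'i \<Rightarrow> real^'j"
  assumes no_pinf: "\<And>i x. u i x \<noteq> \<infinity>"
    and usc: "\<And>i. usc (u i)"
    and conc: "\<And>i. concave_ext (u i)"
    and mono: "\<And>i x r. x \<in> edom (u i) \<Longrightarrow> r > 0 \<Longrightarrow> u i (x + r *\<^sub>R g) > u i x"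
    and x0_dom: "\<And>i. x0 i \<in> edom (u i)"
  shows "(pareto_efficient u x0 x0 \<longrightarrow> double_auction_eq u g x0) \<and>
         ((\<forall>i x x'. x' \<in> edom (u i) \<and> u i x > u i x' \<longrightarrow>
              (\<exists>e0>0. \<forall>e. 0 < e \<and> e \<le> e0 \<longrightarrow> x - e *\<^sub>R g \<in> edom (u i)))
          \<longrightarrow> (double_auction_eq u g x0 \<longrightarrow> pareto_efficient u x0 x0))"
proof -
  have increasing: "\<And>i. increasing_in_direction (u i) g"
    using mono by (simp add: increasing_in_direction_def)
  have "double_auction_eq u g x0" if "pareto_efficient u x0 x0"
    using pareto_efficient_imp_double_auction_eq[of u g x0, OF conc no_pinf increasing x0_dom that] .
  moreover have "pareto_efficient u x0 x0"
    if slack: "\<forall>i x x'. x' \<in> edom (u i) \<and> u i x > u i x' \<longrightarrow>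
                 (\<exists>e0>0. \<forall>e. 0 < e \<and> e \<le> e0 \<longrightarrow> x - e *\<^sub>R g \<in> edom (u i))"
      and equilibrium: "double_auction_eq u g x0"
  proof (rule double_auction_eq_imp_pareto_efficient[of u x0 g, OF conc no_pinf x0_dom _ equilibrium])
    show "\<exists>e>0. x - e *\<^sub>R g \<in> edom (u i)" if "x' \<in> edom (u i)" "u i x' < u i x" for i x x'
      using slack that by (meson order_refl)
  qed
  ultimately show ?thesis by blast
qed

end
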